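(* Let $\mathbb{X}$ be a Cartesian left additive category. A $\mathsf{D}$-sequence $f_\bullet:A\to B$ is linear, i.e. $\mathsf{D}[f_\bullet]=\pi_1\cdot f_\bullet$, if and only if $f_\bullet=i_\bullet\cdot f_0$.
   Context: Composition in diagrammatic order. A Cartesian left additive category: finite products, hom-sets commutative monoids with $f(g+h)=fg+fh$, $f0=0$, projections additive. $\mathsf{P}(X)=X\times X$, $\mathsf{P}(f)=f\times f$. A pre-$\mathsf{D}$-sequence $f_\bullet:A\to B$ is $(f_n)_{n\ge0}$ with $f_n:\mathsf{P}^n(A)\to B$; $(h\cdot f_\bullet)_n=\mathsf{P}^n(h)f_n$, $(f_\bullet\cdot k)_n=f_nk$; $\mathsf{D}[f_\bullet]:\mathsf{P}(A)\to B$, $\mathsf{D}[f_\bullet]_n=f_{n+1}$; identity $i_\bullet$ with $i_0=1$, $i_n=\pi_1\cdots\pi_1$ ($n$ times). In the claim $\pi_1:\mathsf{P}(A)\to A$. A $\mathsf{D}$-sequence is a pre-$\mathsf{D}$-sequence such that for all $n$, with $X=\mathsf{P}^n(A)$: $\langle1,0\rangle\cdot\mathsf{D}^{n+1}[f_\bullet]=0_\bullet$; $(1\times(\pi_0+\pi_1))\cdot\mathsf{D}^{n+1}[f_\bullet]=(1\times\pi_0)\cdot\mathsf{D}^{n+1}[f_\bullet]+(1\times\pi_1)\cdot\mathsf{D}^{n+1}[f_\bullet]$; $\ell\cdot\mathsf{D}^{n+2}[f_\bullet]=\mathsf{D}^{n+1}[f_\bullet]$ with $\ell=\langle1,0\rangle\times\langle0,1\rangle$;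 $c\cdot\mathsf{D}^{n+2}[f_\bullet]=\mathsf{D}^{n+2}[f_\bullet]$ with $c=\langle\langle\pi_0\pi_0,\pi_1\pi_0\rangle,\langle\pi_0\pi_1,\pi_1\pi_1\rangle\rangle$ (sums and $0_\bullet$ pointwise). *)

theory Defs
  imports Main
begin

text \<open>A category given by its arrows (type 'm) and objects (type 'o), with
  composition in diagrammatic order (Comp f g = "f then g"), commutative-monoid
  enriched hom-sets (left additive structure), chosen binary products and a
  terminal object.\<close>

record ('o, 'm) cla =
  cdom  :: "'m \<Rightarrow> 'o"
  ccod  :: "'m \<Rightarrow> 'o"
  Comp  :: "'m \<Rightarrow> 'm \<Rightarrow> 'm"
  Idm   :: "'o \<Rightarrow> 'm"
  Add   :: "'m \<Rightarrow> 'm \<Rightarrow> 'm"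
  Zero  :: "'o \<Rightarrow> 'o \<Rightarrow> 'm"
  Prod  :: "'o \<Rightarrow> 'o \<Rightarrow> 'o"
  Pi0   :: "'o \<Rightarrow> 'o \<Rightarrow> 'm"
  Pi1   :: "'o \<Rightarrow> 'o \<Rightarrow> 'm"
  Pair  :: "'m \<Rightarrow> 'm \<Rightarrow> 'm"
  Term  :: "'o"
  Bang  :: "'o \<Rightarrow> 'm"

definition hom :: "('o, 'm, 'x) cla_scheme \<Rightarrow> 'm \<Rightarrow> 'o \<Rightarrow> 'o \<Rightarrow> bool" where
  "hom C f A B \<longleftrightarrow> cdom C f = A \<and> ccod C f = B"

definition cart_left_additive :: "('o, 'm, 'x) cla_scheme \<Rightarrow> bool" where
  "cart_left_additive C \<longleftrightarrow>
    \<comment> \<open>category\<close>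
    (\<forall>f g A B D. hom C f A B \<longrightarrow> hom C g B D \<longrightarrow> hom C (Comp C f g) A D) \<and>
    (\<forall>f g h A B D E. hom C f A B \<longrightarrow> hom C g B D \<longrightarrow> hom C h D E \<longrightarrow>
        Comp C (Comp C f g) h = Comp C f (Comp C g h)) \<and>
    (\<forall>A. hom C (Idm C A) A A) \<and>
    (\<forall>f A B. hom C f A B \<longrightarrow> Comp C (Idm C A) f = f \<and> Comp C f (Idm C B) = f) \<and>
    \<comment> \<open>hom-sets are commutative monoids\<close>
    (\<forall>f g A B. hom C f A B \<longrightarrow> hom C g A B \<longrightarrow> hom C (Add C f g) A B) \<and>
    (\<forall>f g h A B. hom C f A B \<longrightarrow> hom C g A B \<longrightarrow> hom C h A B \<longrightarrow>
        Add C (Add C f g) h = Add C f (Add C g h)) \<and>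
    (\<forall>f g A B. hom C f A B \<longrightarrow> hom C g A B \<longrightarrow> Add C f g = Add C g f) \<and>
    (\<forall>A B. hom C (Zero C A B) A B) \<and>
    (\<forall>f A B. hom C f A B \<longrightarrow> Add C (Zero C A B) f = f) \<and>
    \<comment> \<open>left additivity: f(g+h) = fg + fh and f0 = 0\<close>
    (\<forall>f g h A B D. hom C f A B \<longrightarrow> hom C g B D \<longrightarrow> hom C h B D \<longrightarrow>
        Comp C f (Add C g h) = Add C (Comp C f g) (Comp C f h)) \<and>
    (\<forall>f A B D. hom C f A B \<longrightarrow> Comp C f (Zero C B D) = Zero C A D) \<and>
    \<comment> \<open>binary products\<close>
    (\<forall>A B. hom C (Pi0 C A B) (Prod C A B) A \<and> hom C (Pi1 C A B) (Prod C A B) B) \<and>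
    (\<forall>f g A B D. hom C f D A \<longrightarrow> hom C g D B \<longrightarrow>
        hom C (Pair C f g) D (Prod C A B) \<and>
        Comp C (Pair C f g) (Pi0 C A B) = f \<and> Comp C (Pair C f g) (Pi1 C A B) = g) \<and>
    (\<forall>h A B D. hom C h D (Prod C A B) \<longrightarrow>
        h = Pair C (Comp C h (Pi0 C A B)) (Comp C h (Pi1 C A B))) \<and>
    \<comment> \<open>terminal object\<close>
    (\<forall>A. hom C (Bang C A) A (Term C)) \<and>
    (\<forall>h A. hom C h A (Term C) \<longrightarrow> h = Bang C A) \<and>
    \<comment> \<open>projections are additive\<close>
    (\<forall>f g A B D. hom C f D (Prod C A B) \<longrightarrow> hom C g D (Prod C A B) \<longrightarrow>
        Comp C (Add C f g) (Pi0 C A B) = Add C (Comp C f (Pi0 C A B)) (Comp C g (Pi0 C A B)) \<and>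
        Comp C (Add C f g) (Pi1 C A B) = Add C (Comp C f (Pi1 C A B)) (Comp C g (Pi1 C A B))) \<and>
    (\<forall>A B D. Comp C (Zero C D (Prod C A B)) (Pi0 C A B) = Zero C D A \<and>
             Comp C (Zero C D (Prod C A B)) (Pi1 C A B) = Zero C D B)"

definition times :: "('o, 'm, 'x) cla_scheme \<Rightarrow> 'm \<Rightarrow> 'm \<Rightarrow> 'm" where
  "times C f g = Pair C (Comp C (Pi0 C (cdom C f) (cdom C g)) f)
                        (Comp C (Pi1 C (cdom C f) (cdom C g)) g)"

definition PO :: "('o, 'm, 'x) cla_scheme \<Rightarrow> 'o \<Rightarrow> 'o" where
  "PO C X = Prod C X X"

definition PM :: "('o, 'm, 'x) cla_scheme \<Rightarrow> 'm \<Rightarrow> 'm" where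
  "PM C f = times C f f"

definition Pn_obj :: "('o, 'm, 'x) cla_scheme \<Rightarrow> nat \<Rightarrow> 'o \<Rightarrow> 'o" where
  "Pn_obj C n X = (PO C ^^ n) X"

definition Pn_mor :: "('o, 'm, 'x) cla_scheme \<Rightarrow> nat \<Rightarrow> 'm \<Rightarrow> 'm" where
  "Pn_mor C n f = (PM C ^^ n) f"

definition pre_D_seq :: "('o, 'm, 'x) cla_scheme \<Rightarrow> 'o \<Rightarrow> 'o \<Rightarrow> (nat \<Rightarrow> 'm) \<Rightarrow> bool" where
  "pre_D_seq C A B f \<longleftrightarrow> (\<forall>n. hom C (f n) (Pn_obj C n A) B)"

definition seq_pre :: "('o, 'm, 'x) cla_scheme \<Rightarrow> 'm \<Rightarrow> (nat \<Rightarrow> 'm) \<Rightarrow> nat \<Rightarrow> 'm" where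
  "seq_pre C h f = (\<lambda>n. Comp C (Pn_mor C n h) (f n))"

definition seq_post :: "('o, 'm, 'x) cla_scheme \<Rightarrow> (nat \<Rightarrow> 'm) \<Rightarrow> 'm \<Rightarrow> nat \<Rightarrow> 'm" where
  "seq_post C f k = (\<lambda>n. Comp C (f n) k)"

definition seq_D :: "(nat \<Rightarrow> 'm) \<Rightarrow> nat \<Rightarrow> 'm" where
  "seq_D f = (\<lambda>n. f (Suc n))"

definition seq_add :: "('o, 'm, 'x) cla_scheme \<Rightarrow> (nat \<Rightarrow> 'm) \<Rightarrow> (nat \<Rightarrow> 'm) \<Rightarrow> nat \<Rightarrow> 'm" where
  "seq_add C f g = (\<lambda>n. Add C (f n) (g n))"

definition seq_zero :: "('o, 'm, 'x) cla_scheme \<Rightarrow> 'o \<Rightarrow> 'o \<Rightarrow> nat \<Rightarrow> 'm" where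
  "seq_zero C A B = (\<lambda>n. Zero C (Pn_obj C n A) B)"

primrec id_seq :: "('o, 'm, 'x) cla_scheme \<Rightarrow> 'o \<Rightarrow> nat \<Rightarrow> 'm" where
  "id_seq C A 0 = Idm C A"
| "id_seq C A (Suc n) = Comp C (Pi1 C (Pn_obj C n A) (Pn_obj C n A)) (id_seq C A n)"

definition D_seq :: "('o, 'm, 'x) cla_scheme \<Rightarrow> 'o \<Rightarrow> 'o \<Rightarrow> (nat \<Rightarrow> 'm) \<Rightarrow> bool" where
  "D_seq C A B f \<longleftrightarrow> pre_D_seq C A B f \<and>
    (\<forall>n. let X = Pn_obj C n A; Y = PO C X;
             p0 = Pi0 C X X; p1 = Pi1 C X X; q0 = Pi0 C Y Y; q1 = Pi1 C Y Y;
             D1 = (seq_D ^^ Suc n) f; D2 = (seq_D ^^ Suc (Suc n)) f;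
             e10 = Pair C (Idm C X) (Zero C X X); e01 = Pair C (Zero C X X) (Idm C X)
         in seq_pre C e10 D1 = seq_zero C X B
          \<and> seq_pre C (times C (Idm C X) (Add C p0 p1)) D1
              = seq_add C (seq_pre C (times C (Idm C X) p0) D1)
                          (seq_pre C (times C (Idm C X) p1) D1)
          \<and> seq_pre C (times C e10 e01) D2 = D1
          \<and> seq_pre C (Pair C (Pair C (Comp C q0 p0) (Comp C q1 p0))
                               (Pair C (Comp C q0 p1) (Comp C q1 p1))) D2 = D2)"

end

theory Submission
  imports Defs
begin

text \<open>Linearity says f(n+1) = P^n(\<pi>1) f(n). Since \<pi>1 is natural, P^n(h) i(n) = i(n) h for
  every h, and i(n+1) = i(n) \<pi>1 with i(n) taken at P(A); hence P^n(\<pi>1) i(n) = i(n+1), so i\<cdot>f(0)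
  is linear and, by induction on n, it is the only linear sequence with the given f(0). Of the
  D-sequence axioms only f(0) : A \<rightarrow> B is needed.\<close>

locale cla_category =
  fixes C :: "('o, 'm, 'x) cla_scheme"
  assumes cla: "cart_left_additive C"
begin

lemma comp_hom: "hom C f A B \<Longrightarrow> hom C g B D \<Longrightarrow> hom C (Comp C f g) A D"
  using cla unfolding cart_left_additive_def by metis

lemma comp_assoc:
  "hom C f A B \<Longrightarrow> hom C g B D \<Longrightarrow> hom C h D E \<Longrightarrow>
    Comp C (Comp C f g) h = Comp C f (Comp C g h)"
  using cla unfolding cart_left_additive_def by metis

lemma id_hom: "hom C (Idm C A) A A"
  using cla by (simp add: cart_left_additive_def)

lemma id_left: "hom C f A B \<Longrightarrow> Comp C (Idm C A) f = f"
  using cla by (simp add: cart_left_additive_def)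

lemma id_right: "hom C f A B \<Longrightarrow> Comp C f (Idm C B) = f"
  using cla by (simp add: cart_left_additive_def)

lemma Pi0_hom: "hom C (Pi0 C A B) (Prod C A B) A"
  using cla by (simp add: cart_left_additive_def)

lemma Pi1_hom: "hom C (Pi1 C A B) (Prod C A B) B"
  using cla by (simp add: cart_left_additive_def)

lemma Pair_hom: "hom C f D A \<Longrightarrow> hom C g D B \<Longrightarrow> hom C (Pair C f g) D (Prod C A B)"
  using cla by (simp add: cart_left_additive_def)

lemma Pair_Pi1: "hom C f D A \<Longrightarrow> hom C g D B \<Longrightarrow> Comp C (Pair C f g) (Pi1 C A B) = g"
  using cla by (simp add: cart_left_additive_def)

lemma PO_Pi1_hom: "hom C (Pi1 C X X) (PO C X) X"
  unfolding PO_def by (rule Pi1_hom)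

lemma PM_hom_Pi1:
  assumes h: "hom C h X Y"
  shows "hom C (PM C h) (PO C X) (PO C Y)"
    and "Comp C (PM C h) (Pi1 C Y Y) = Comp C (Pi1 C X X) h"
proof -
  have dom: "cdom C h = X" using h by (simp add: hom_def)
  have "hom C (Comp C (Pi0 C X X) h) (PO C X) Y" "hom C (Comp C (Pi1 C X X) h) (PO C X) Y"
    using comp_hom[OF Pi0_hom h] comp_hom[OF Pi1_hom h] by (simp_all add: PO_def)
  then show "hom C (PM C h) (PO C X) (PO C Y)"
    and "Comp C (PM C h) (Pi1 C Y Y) = Comp C (Pi1 C X X) h"
    using Pair_hom Pair_Pi1 unfolding PM_def times_def dom PO_def by simp_all
qed

lemma Pn_mor_hom: "hom C h X Y \<Longrightarrow> hom C (Pn_mor C n h) (Pn_obj C n X) (Pn_obj C n Y)"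
  by (induction n) (simp_all add: Pn_mor_def Pn_obj_def PM_hom_Pi1)

lemma id_seq_hom: "hom C (id_seq C X n) (Pn_obj C n X) X"
proof (induction n)
  case 0
  show ?case using id_hom by (simp add: Pn_obj_def)
next
  case (Suc n)
  then show ?case using comp_hom[OF PO_Pi1_hom] by (simp add: Pn_obj_def)
qed

lemma id_seq_natural:
  assumes h: "hom C h X Y"
  shows "Comp C (Pn_mor C n h) (id_seq C Y n) = Comp C (id_seq C X n) h"
proof (induction n)
  case 0
  show ?case using id_left[OF h] id_right[OF h] by (simp add: Pn_mor_def)
next
  case (Suc n)
  let ?X = "Pn_obj C n X" and ?Y = "Pn_obj C n Y" and ?h = "Pn_mor C n h"
  have hn: "hom C ?h ?X ?Y" by (rule Pn_mor_hom[OF h])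
  have "Comp C (Pn_mor C (Suc n) h) (id_seq C Y (Suc n))
      = Comp C (PM C ?h) (Comp C (Pi1 C ?Y ?Y) (id_seq C Y n))"
    by (simp add: Pn_mor_def)
  also have "\<dots> = Comp C (Comp C (PM C ?h) (Pi1 C ?Y ?Y)) (id_seq C Y n)"
    using comp_assoc[OF PM_hom_Pi1(1)[OF hn] PO_Pi1_hom id_seq_hom] by simp
  also have "\<dots> = Comp C (Pi1 C ?X ?X) (Comp C ?h (id_seq C Y n))"
    using PM_hom_Pi1(2)[OF hn] comp_assoc[OF PO_Pi1_hom hn id_seq_hom] by simp
  also have "\<dots> = Comp C (Pi1 C ?X ?X) (Comp C (id_seq C X n) h)"
    using Suc by simp
  also have "\<dots> = Comp C (id_seq C X (Suc n)) h"
    using comp_assoc[OF PO_Pi1_hom id_seq_hom h] by simp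
  finally show ?case .
qed

lemma Pn_obj_Suc_right: "Pn_obj C (Suc n) X = Pn_obj C n (PO C X)"
  by (simp add: Pn_obj_def funpow_Suc_right del: funpow.simps)

lemma id_seq_Suc_right: "id_seq C A (Suc n) = Comp C (id_seq C (PO C A) n) (Pi1 C A A)"
proof (induction n)
  case 0
  show ?case using id_left[OF PO_Pi1_hom] id_right[OF PO_Pi1_hom] by (simp add: Pn_obj_def)
next
  case (Suc n)
  then show ?case
    using comp_assoc[OF PO_Pi1_hom id_seq_hom PO_Pi1_hom] by (simp add: Pn_obj_Suc_right)
qed

lemma Pn_mor_Pi1_id_seq: "Comp C (Pn_mor C n (Pi1 C A A)) (id_seq C A n) = id_seq C A (Suc n)"
  using id_seq_natural[OF PO_Pi1_hom] id_seq_Suc_right by metis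

lemma Pn_mor_Pi1_id_seq_post:
  assumes g: "hom C g A B"
  shows "Comp C (Pn_mor C n (Pi1 C A A)) (Comp C (id_seq C A n) g) = Comp C (id_seq C A (Suc n)) g"
proof -
  have "Comp C (Pn_mor C n (Pi1 C A A)) (Comp C (id_seq C A n) g)
      = Comp C (Comp C (Pn_mor C n (Pi1 C A A)) (id_seq C A n)) g"
    using comp_assoc[OF Pn_mor_hom[OF PO_Pi1_hom] id_seq_hom g, symmetric]
    by (simp only: Pn_obj_Suc_right)
  then show ?thesis
    by (simp only: Pn_mor_Pi1_id_seq)
qed

lemma id_seq_post_linear:
  assumes "hom C g A B"
  shows "seq_D (seq_post C (id_seq C A) g) = seq_pre C (Pi1 C A A) (seq_post C (id_seq C A) g)"
  unfolding seq_D_def seq_pre_def seq_post_def using Pn_mor_Pi1_id_seq_post[OF assms] by simp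

lemma linear_iff_id_seq_post:
  assumes f0: "hom C (f 0) A B"
  shows "seq_D f = seq_pre C (Pi1 C A A) f \<longleftrightarrow> f = seq_post C (id_seq C A) (f 0)"
proof
  assume linear: "seq_D f = seq_pre C (Pi1 C A A) f"
  have "f n = Comp C (id_seq C A n) (f 0)" for n
  proof (induction n)
    case 0
    show ?case using id_left[OF f0] by simp
  next
    case (Suc n)
    have "f (Suc n) = Comp C (Pn_mor C n (Pi1 C A A)) (f n)"
      using fun_cong[OF linear, of n] by (simp add: seq_D_def seq_pre_def)
    then show ?case using Suc Pn_mor_Pi1_id_seq_post[OF f0] by simp
  qed
  then show "f = seq_post C (id_seq C A) (f 0)"
    unfolding seq_post_def by (rule ext)
next
  assume "f = seq_post C (id_seq C A) (f 0)"
  with id_seq_post_linear[OF f0] show "seq_D f = seq_pre C (Pi1 C A A) f"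
    by (simp only:)
qed

end

theorem lemma4p23:
  fixes C :: "('o, 'm, 'x) cla_scheme" and A B :: 'o and f :: "nat \<Rightarrow> 'm"
  assumes "cart_left_additive C"
    and "D_seq C A B f"
  shows "seq_D f = seq_pre C (Pi1 C A A) f \<longleftrightarrow> f = seq_post C (id_seq C A) (f 0)"
proof -
  interpret cla_category C by standard (fact assms(1))
  have "pre_D_seq C A B f"
    using assms(2) unfolding D_seq_def by (rule conjunct1)
  then have "hom C (f 0) (Pn_obj C 0 A) B"
    unfolding pre_D_seq_def by (rule spec)
  then have "hom C (f 0) A B"
    by (simp add: Pn_obj_def)
  then show ?thesis by (rule linear_iff_id_seq_post)
qed

end
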